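(* Let $G$ be an $l$-group (a topological group with a basis of neighbourhoods of the identity consisting of compact open subgroups), $N\subset G$ a closed normal subgroup, $\chi$ a continuous character of $N$, and $\Gamma\subset G$ a discrete subgroup such that $\chi|_{\Gamma\cap N}\equiv1$, the image of $\Gamma$ in $G/N$ is discrete, and conjugation by $\Gamma$ preserves $\chi$. Let $\chi'$ be the unique character of $\Gamma N$ trivial on $\Gamma$ and extending $\chi$. Then the map of $G$-representations $$\Theta:\operatorname{Ind}_N^G\chi\to\operatorname{Ind}_{\Gamma N}^G\chi',\qquad \Theta(\phi)(g)=\sum_{\gamma\in\Gamma/(\Gamma\cap N)}\phi(\gamma g)$$ is surjective.
   Context: For a closed subgroup $H\subset G$ and a character $\rho$ of $H$, the compactly induced representation $\operatorname{Ind}_H^G\rho$ is the space of locally constant functions $f:G\to\mathbb C$ with $f(hg)=\rho(h)f(g)$ for $h\in H$, $g\in G$, whose support is compact modulo $H$, with $G$ acting by right translation. *)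

theory Defs
  imports "HOL-Analysis.Analysis"
begin

text \<open>Groups are written additively (class group_add is not assumed commutative).
  The ambient group G is the whole type 'g.\<close>

definition is_subgroup :: "'g::group_add set \<Rightarrow> bool" where
  "is_subgroup H \<longleftrightarrow> 0 \<in> H \<and> (\<forall>x\<in>H. \<forall>y\<in>H. x + y \<in> H) \<and> (\<forall>x\<in>H. - x \<in> H)"

definition is_normal_subgroup :: "'g::group_add set \<Rightarrow> bool" where
  "is_normal_subgroup N \<longleftrightarrow> is_subgroup N \<and> (\<forall>g. \<forall>n\<in>N. g + n - g \<in> N)"

definition l_group :: "'g::topological_group_add itself \<Rightarrow> bool" where
  "l_group _ \<longleftrightarrow> (\<forall>U::'g set. open U \<and> 0 \<in> U \<longrightarrow>
       (\<exists>K. is_subgroup K \<and> compact K \<and> open K \<and> K \<subseteq> U))"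

definition character :: "'g::topological_group_add set \<Rightarrow> ('g \<Rightarrow> complex) \<Rightarrow> bool" where
  "character H \<rho> \<longleftrightarrow> continuous_on H \<rho> \<and> (\<forall>h\<in>H. \<rho> h \<noteq> 0) \<and>
      (\<forall>x\<in>H. \<forall>y\<in>H. \<rho> (x + y) = \<rho> x * \<rho> y)"

definition set_plus_grp :: "'g::group_add set \<Rightarrow> 'g set \<Rightarrow> 'g set" where
  "set_plus_grp A B = {a + b | a b. a \<in> A \<and> b \<in> B}"

definition locally_constant :: "('g::topological_space \<Rightarrow> 'b) \<Rightarrow> bool" where
  "locally_constant f \<longleftrightarrow> (\<forall>x. \<exists>U. open U \<and> x \<in> U \<and> (\<forall>y\<in>U. f y = f x))"

definition Ind :: "'g::topological_group_add set \<Rightarrow> ('g \<Rightarrow> complex) \<Rightarrow> ('g \<Rightarrow> complex) set" where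
  "Ind H \<rho> = {f. locally_constant f \<and> (\<forall>h\<in>H. \<forall>g. f (h + g) = \<rho> h * f g) \<and>
      (\<exists>C. compact C \<and> {x. f x \<noteq> 0} \<subseteq> set_plus_grp H C)}"

definition coset_of :: "'g::group_add set \<Rightarrow> 'g \<Rightarrow> 'g set" where
  "coset_of N x = (\<lambda>n. x + n) ` N"

text \<open>The image of \<Gamma> in G/N is discrete, where G/N carries the quotient topology
  (a set of cosets is open iff its union is open in G).\<close>
definition discrete_image_mod :: "'g::topological_group_add set \<Rightarrow> 'g set \<Rightarrow> bool" where
  "discrete_image_mod N \<Gamma> \<longleftrightarrow> (\<forall>\<gamma>\<in>\<Gamma>. \<exists>U. U \<subseteq> range (coset_of N) \<and> open (\<Union>U) \<and>
      U \<inter> coset_of N ` \<Gamma> = {coset_of N \<gamma>})"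

definition Theta :: "'g::topological_group_add set \<Rightarrow> 'g set \<Rightarrow> ('g \<Rightarrow> complex) \<Rightarrow> 'g \<Rightarrow> complex" where
  "Theta N \<Gamma> \<phi> g = (\<Sum>\<^sub>\<infinity>C \<in> coset_of (\<Gamma> \<inter> N) ` \<Gamma>. \<phi> ((SOME \<gamma>. \<gamma> \<in> C) + g))"

end

theory Submission
  imports Defs
begin

(* Since the image of \<Gamma> in G/N is discrete, some compact open subgroup V satisfies
   \<Gamma> \<inter> (N + V) \<subseteq> N, so for every compact D only finitely many cosets of \<Gamma> \<inter> N in \<Gamma> have
   representatives in N + D. Hence on a compact open neighbourhood of any point the series
   defining Theta \<phi> is a finite sum of translates of \<phi>, which makes Theta \<phi> locally constant
   with compact support modulo \<Gamma> + N; translating by \<Gamma> permutes the cosets and translating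
   by N multiplies every term by chi, so Theta \<phi> lies in Ind (\<Gamma> + N) chi'.
   For surjectivity take f in the target with support in (\<Gamma> + N) + C, put D = C + K for a
   compact open subgroup K and let \<psi> be the indicator function of N + D. Then S = Theta \<psi> is
   (\<Gamma> + N)-invariant, locally constant and has real part at least 1 on D, so it vanishes
   nowhere on the support of f, and \<phi> = f \<psi> / S satisfies Theta \<phi> = (f / S) Theta \<psi> = f. *)

lemma subgroup_zero: "is_subgroup H \<Longrightarrow> 0 \<in> H"
  unfolding is_subgroup_def by blast

lemma subgroup_add: "is_subgroup H \<Longrightarrow> x \<in> H \<Longrightarrow> y \<in> H \<Longrightarrow> x + y \<in> H"
  unfolding is_subgroup_def by blast

lemma subgroup_uminus: "is_subgroup H \<Longrightarrow> x \<in> H \<Longrightarrow> - x \<in> H"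
  unfolding is_subgroup_def by blast

lemma subgroup_Int: "is_subgroup A \<Longrightarrow> is_subgroup B \<Longrightarrow> is_subgroup (A \<inter> B)"
  unfolding is_subgroup_def by blast

lemma normal_subgroup_is_subgroup: "is_normal_subgroup N \<Longrightarrow> is_subgroup N"
  unfolding is_normal_subgroup_def by blast

lemma normal_subgroup_conj: "is_normal_subgroup N \<Longrightarrow> n \<in> N \<Longrightarrow> g + n - g \<in> N"
  unfolding is_normal_subgroup_def by blast

lemma normal_subgroup_conj': "is_normal_subgroup N \<Longrightarrow> n \<in> N \<Longrightarrow> - g + n + g \<in> N"
  using normal_subgroup_conj[of N n "- g"] by simp

lemma set_plus_grpI: "a \<in> A \<Longrightarrow> b \<in> B \<Longrightarrow> a + b \<in> set_plus_grp A B"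
  unfolding set_plus_grp_def by blast

lemma set_plus_grpE:
  assumes "x \<in> set_plus_grp A B"
  obtains a b where "a \<in> A" "b \<in> B" "x = a + b"
  using assms unfolding set_plus_grp_def by blast

lemma set_plus_grp_mono: "B \<subseteq> B' \<Longrightarrow> set_plus_grp A B \<subseteq> set_plus_grp A B'"
  unfolding set_plus_grp_def by blast

lemma set_plus_grp_add_left_iff:
  assumes "is_subgroup N" "n \<in> N"
  shows "n + x \<in> set_plus_grp N D \<longleftrightarrow> x \<in> set_plus_grp N D"
proof
  assume "n + x \<in> set_plus_grp N D"
  then obtain m d where md: "m \<in> N" "d \<in> D" "n + x = m + d"
    by (rule set_plus_grpE)
  then have "x = (- n + m) + d"
    by (metis add.assoc minus_add_cancel)
  then show "x \<in> set_plus_grp N D"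
    using md(1,2) assms by (simp add: set_plus_grpI subgroup_add subgroup_uminus)
next
  assume "x \<in> set_plus_grp N D"
  then obtain m d where md: "m \<in> N" "d \<in> D" "x = m + d"
    by (rule set_plus_grpE)
  then have "n + x = (n + m) + d"
    by (simp add: add.assoc)
  then show "n + x \<in> set_plus_grp N D"
    using md(1,2) assms by (simp add: set_plus_grpI subgroup_add)
qed

lemma set_plus_grp_subgroup_right:
  assumes "is_subgroup K"
  shows "C \<subseteq> set_plus_grp C K" and "d \<in> set_plus_grp C K \<Longrightarrow> k \<in> K \<Longrightarrow> d + k \<in> set_plus_grp C K"
proof -
  show "C \<subseteq> set_plus_grp C K"
    using set_plus_grpI[OF _ subgroup_zero[OF assms]] by fastforce
  assume "d \<in> set_plus_grp C K" "k \<in> K"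
  then obtain c k' where "c \<in> C" "k' \<in> K" "d + k = c + (k' + k)"
    by (metis add.assoc set_plus_grpE)
  then show "d + k \<in> set_plus_grp C K"
    using \<open>k \<in> K\<close> by (metis set_plus_grpI subgroup_add[OF assms])
qed

lemma subgroup_set_plus_normal:
  assumes N: "is_normal_subgroup N" and V: "is_subgroup V"
  shows "is_subgroup (set_plus_grp N V)"
  unfolding is_subgroup_def
proof (intro conjI ballI)
  have "0 + 0 \<in> set_plus_grp N V"
    by (intro set_plus_grpI subgroup_zero V normal_subgroup_is_subgroup N)
  then show "0 \<in> set_plus_grp N V" by simp
next
  fix x y assume "x \<in> set_plus_grp N V" "y \<in> set_plus_grp N V"
  then obtain n v m w where nvmw: "n \<in> N" "v \<in> V" "m \<in> N" "w \<in> V" "x = n + v" "y = m + w"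
    by (metis set_plus_grpE)
  have "x + y = (n + (v + m - v)) + (v + w)"
    by (simp add: nvmw add.assoc diff_conv_add_uminus del: add_uminus_conv_diff)
  moreover have "n + (v + m - v) \<in> N"
    using nvmw N by (intro subgroup_add normal_subgroup_conj normal_subgroup_is_subgroup)
  ultimately show "x + y \<in> set_plus_grp N V"
    using nvmw V by (metis set_plus_grpI subgroup_add)
next
  fix x assume "x \<in> set_plus_grp N V"
  then obtain n v where nv: "n \<in> N" "v \<in> V" "x = n + v"
    by (metis set_plus_grpE)
  have "- x = (- v + - n + v) + - v"
    by (simp add: nv minus_add add.assoc)
  moreover have "- v + - n + v \<in> N"
    using nv N by (intro normal_subgroup_conj' subgroup_uminus normal_subgroup_is_subgroup)
  ultimately show "- x \<in> set_plus_grp N V"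
    using nv V by (metis set_plus_grpI subgroup_uminus)
qed

lemma mem_coset_of: "y \<in> coset_of H x \<longleftrightarrow> - x + y \<in> H"
proof
  assume "y \<in> coset_of H x"
  then obtain h where "h \<in> H" "y = x + h"
    unfolding coset_of_def by blast
  then show "- x + y \<in> H" by simp
next
  assume "- x + y \<in> H"
  then show "y \<in> coset_of H x"
    unfolding coset_of_def by (rule rev_image_eqI) simp
qed

lemma coset_of_self: "is_subgroup H \<Longrightarrow> x \<in> coset_of H x"
  by (simp add: mem_coset_of subgroup_zero)

lemma coset_of_eq_iff:
  assumes "is_subgroup H"
  shows "coset_of H x = coset_of H y \<longleftrightarrow> - x + y \<in> H"
proof
  assume "coset_of H x = coset_of H y"
  then show "- x + y \<in> H"
    by (metis coset_of_self[OF assms] mem_coset_of)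
next
  assume xy: "- x + y \<in> H"
  have "- x + z \<in> H \<longleftrightarrow> - y + z \<in> H" for z
  proof
    assume "- x + z \<in> H"
    then have "- (- x + y) + (- x + z) \<in> H"
      using xy assms by (metis subgroup_add subgroup_uminus)
    then show "- y + z \<in> H" by (simp add: minus_add add.assoc)
  next
    assume "- y + z \<in> H"
    then have "(- x + y) + (- y + z) \<in> H"
      using xy assms by (metis subgroup_add)
    then show "- x + z \<in> H" by (simp add: add.assoc)
  qed
  then show "coset_of H x = coset_of H y"
    by (auto simp: mem_coset_of)
qed

lemma normal_subgroup_add_coset:
  assumes N: "is_normal_subgroup N" and "n \<in> N" "v \<in> coset_of N y"
  shows "n + v \<in> coset_of N y"
proof -
  have "- y + (n + v) = (- y + n + y) + (- y + v)"
    by (simp add: add.assoc)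
  moreover have "- y + n + y \<in> N" "- y + v \<in> N"
    using assms normal_subgroup_conj'[OF N] by (simp_all add: mem_coset_of)
  ultimately show ?thesis
    using subgroup_add[OF normal_subgroup_is_subgroup[OF N]] by (simp add: mem_coset_of)
qed

lemma coset_of_eq_of_mem:
  "is_subgroup H \<Longrightarrow> x \<in> coset_of H y \<Longrightarrow> coset_of H x = coset_of H y"
  by (metis coset_of_eq_iff coset_of_self mem_coset_of)

lemma image_add_right_coset_of:
  assumes "\<And>h. h \<in> H \<Longrightarrow> - a + h + a \<in> H" "\<And>h. h \<in> H \<Longrightarrow> a + h - a \<in> H"
  shows "(\<lambda>x. x + a) ` coset_of H y = coset_of H (y + a)"
proof -
  have "- y + (z - a) \<in> H \<longleftrightarrow> - (y + a) + z \<in> H" for z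
    using assms[of "- y + (z - a)"] assms[of "- (y + a) + z"]
    by (auto simp: add.assoc minus_add diff_conv_add_uminus simp del: add_uminus_conv_diff)
  moreover have "(\<lambda>x. x + a) ` A = (\<lambda>z. z - a) -` A" for A
    by (auto simp: image_iff) (metis diff_add_cancel)
  ultimately show ?thesis
    by (auto simp: mem_coset_of)
qed

lemma image_add_left_eq_vimage:
  fixes a :: "'a::group_add"
  shows "(\<lambda>x. a + x) ` A = (\<lambda>x. - a + x) -` A"
  by (auto simp: image_iff) (metis add_minus_cancel)

lemma open_image_add_left:
  fixes A :: "'a::topological_group_add set"
  shows "open A \<Longrightarrow> open ((\<lambda>x. a + x) ` A)"
  unfolding image_add_left_eq_vimage by (intro open_vimage continuous_intros)

lemma compact_image_add_left:
  fixes A :: "'a::topological_group_add set"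
  shows "compact A \<Longrightarrow> compact ((\<lambda>x. a + x) ` A)"
  by (intro compact_continuous_image continuous_intros)

lemma compact_set_plus_grp:
  fixes A B :: "'a::topological_group_add set"
  assumes "compact A" "compact B"
  shows "compact (set_plus_grp A B)"
proof -
  have "set_plus_grp A B = (\<lambda>p. fst p + snd p) ` (A \<times> B)"
    unfolding set_plus_grp_def by force
  then show ?thesis
    using assms by (simp add: compact_continuous_image compact_Times continuous_on_add
        continuous_on_fst continuous_on_snd continuous_on_id)
qed

lemma l_group_compact_open_subgroup:
  assumes "l_group TYPE('a)"
  obtains K :: "'a::topological_group_add set" where "is_subgroup K" "compact K" "open K"
  using assms[unfolded l_group_def, rule_format, of UNIV] that by auto

lemma locally_constant_const: "locally_constant (\<lambda>x. c)"
  unfolding locally_constant_def by (intro allI exI[of _ UNIV]) simp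

lemma locally_constant_combine:
  assumes "locally_constant f" "locally_constant g"
  shows "locally_constant (\<lambda>x. h (f x) (g x))"
  unfolding locally_constant_def
proof
  fix x
  obtain U where U: "open U" "x \<in> U" "\<forall>y\<in>U. f y = f x"
    using assms(1) unfolding locally_constant_def by blast
  obtain W where W: "open W" "x \<in> W" "\<forall>y\<in>W. g y = g x"
    using assms(2) unfolding locally_constant_def by blast
  have "\<forall>y\<in>U \<inter> W. h (f y) (g y) = h (f x) (g x)"
    using U(3) W(3) by (metis IntD1 IntD2)
  with U W show "\<exists>V. open V \<and> x \<in> V \<and> (\<forall>y\<in>V. h (f y) (g y) = h (f x) (g x))"
    by (meson IntI open_Int)
qed

lemma locally_constant_sum:
  assumes "finite I" "\<And>i. i \<in> I \<Longrightarrow> locally_constant (f i)"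
  shows "locally_constant (\<lambda>x. \<Sum>i\<in>I. f i x)"
  using assms
proof (induction I rule: finite_induct)
  case empty
  then show ?case by (simp add: locally_constant_const)
next
  case (insert i I)
  then have "locally_constant (\<lambda>x. f i x + (\<Sum>i\<in>I. f i x))"
    by (intro locally_constant_combine[of "f i" _ "(+)"]) simp_all
  with insert.hyps show ?case by simp
qed

lemma locally_constant_compose:
  assumes "continuous_on UNIV u" "locally_constant f"
  shows "locally_constant (\<lambda>x. f (u x))"
  unfolding locally_constant_def
proof
  fix x
  obtain U where U: "open U" "u x \<in> U" "\<forall>y\<in>U. f y = f (u x)"
    using assms(2) unfolding locally_constant_def by blast
  have "open (u -` U)"
    using U(1) assms(1) by (rule open_vimage)
  with U show "\<exists>V. open V \<and> x \<in> V \<and> (\<forall>y\<in>V. f (u y) = f (u x))"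
    by (metis vimageD vimageI2)
qed

lemma locally_constantI_local:
  assumes "\<And>x. \<exists>U g. open U \<and> x \<in> U \<and> locally_constant g \<and> (\<forall>y\<in>U. f y = g y)"
  shows "locally_constant f"
  unfolding locally_constant_def
proof
  fix x
  obtain U g where U: "open U" "x \<in> U" "locally_constant g" "\<forall>y\<in>U. f y = g y"
    using assms by blast
  then obtain W where W: "open W" "x \<in> W" "\<forall>y\<in>W. g y = g x"
    unfolding locally_constant_def by blast
  have "\<forall>y\<in>U \<inter> W. f y = f x"
    using U(2,4) W(3) by (metis IntD1 IntD2)
  with U W show "\<exists>V. open V \<and> x \<in> V \<and> (\<forall>y\<in>V. f y = f x)"
    by (meson IntI open_Int)
qed

lemma locally_constant_indicator_stable:
  fixes K :: "'a::topological_group_add set"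
  assumes K: "is_subgroup K" "open K" and stable: "\<And>a k. a \<in> A \<Longrightarrow> k \<in> K \<Longrightarrow> a + k \<in> A"
  shows "locally_constant (\<lambda>x. if x \<in> A then c else d)"
  unfolding locally_constant_def
proof
  fix x
  have "x + k \<in> A \<longleftrightarrow> x \<in> A" if "k \<in> K" for k
  proof
    assume "x + k \<in> A"
    then have "x + k + - k \<in> A"
      using stable subgroup_uminus[OF K(1) that] by blast
    then show "x \<in> A" by (simp add: add.assoc)
  qed (use stable that in blast)
  moreover have "x \<in> (\<lambda>k. x + k) ` K"
    using subgroup_zero[OF K(1)] by (rule rev_image_eqI) simp
  ultimately show "\<exists>U. open U \<and> x \<in> U \<and> (\<forall>y\<in>U. (if y \<in> A then c else d) = (if x \<in> A then c else d))"
    using open_image_add_left[OF K(2)] by (intro exI[of _ "(\<lambda>k. x + k) ` K"]) fastforce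
qed

lemma IndI:
  assumes "locally_constant f" "\<And>h g. h \<in> H \<Longrightarrow> f (h + g) = \<rho> h * f g"
    and "compact C" "{x. f x \<noteq> 0} \<subseteq> set_plus_grp H C"
  shows "f \<in> Ind H \<rho>"
  using assms unfolding Ind_def by blast

lemma Ind_locally_constant: "f \<in> Ind H \<rho> \<Longrightarrow> locally_constant f"
  unfolding Ind_def by blast

lemma Ind_equivariant: "f \<in> Ind H \<rho> \<Longrightarrow> h \<in> H \<Longrightarrow> f (h + g) = \<rho> h * f g"
  unfolding Ind_def by blast

lemma Ind_compact_supportE:
  assumes "f \<in> Ind H \<rho>"
  obtains C where "compact C" "{x. f x \<noteq> 0} \<subseteq> set_plus_grp H C"
  using assms unfolding Ind_def by blast

definition rep :: "'a set \<Rightarrow> 'a" where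
  "rep C = (SOME x. x \<in> C)"

lemma rep_in: "x \<in> C \<Longrightarrow> rep C \<in> C"
  unfolding rep_def by (rule someI)

locale discrete_mod_normal =
  fixes N \<Gamma> :: "'g::topological_group_add set"
  assumes l_group: "l_group TYPE('g)"
    and normal: "is_normal_subgroup N"
    and subgroup_Gamma: "is_subgroup \<Gamma>"
    and discrete_image: "discrete_image_mod N \<Gamma>"
begin

definition cosets :: "'g set set" where
  "cosets = coset_of (\<Gamma> \<inter> N) ` \<Gamma>"

lemma subgroup_N: "is_subgroup N"
  using normal by (rule normal_subgroup_is_subgroup)

lemma subgroup_Gamma_Int_N: "is_subgroup (\<Gamma> \<inter> N)"
  using subgroup_Gamma subgroup_N by (rule subgroup_Int)

lemma Theta_eq: "Theta N \<Gamma> \<phi> g = (\<Sum>\<^sub>\<infinity>C\<in>cosets. \<phi> (rep C + g))"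
  by (simp add: Theta_def rep_def cosets_def)

lemma conj_Gamma_Int_N: "a \<in> \<Gamma> \<Longrightarrow> h \<in> \<Gamma> \<inter> N \<Longrightarrow> a + h - a \<in> \<Gamma> \<inter> N"
  using subgroup_Gamma normal_subgroup_conj[OF normal]
  by (simp add: diff_conv_add_uminus subgroup_add subgroup_uminus del: add_uminus_conv_diff)

lemma Gamma_subset_Gamma_plus_N: "\<Gamma> \<subseteq> set_plus_grp \<Gamma> N"
  using set_plus_grpI[OF _ subgroup_zero[OF subgroup_N]] by fastforce

lemma N_subset_Gamma_plus_N: "N \<subseteq> set_plus_grp \<Gamma> N"
  using set_plus_grpI[OF subgroup_zero[OF subgroup_Gamma]] by fastforce

lemma rep_cosets:
  assumes "C \<in> cosets"
  shows "rep C \<in> C" "rep C \<in> \<Gamma>" "coset_of (\<Gamma> \<inter> N) (rep C) = C"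
proof -
  obtain y where y: "y \<in> \<Gamma>" "C = coset_of (\<Gamma> \<inter> N) y"
    using assms unfolding cosets_def by blast
  then show "rep C \<in> C"
    using coset_of_self[OF subgroup_Gamma_Int_N] by (metis rep_in)
  then have "- y + rep C \<in> \<Gamma>"
    using y mem_coset_of by blast
  then show "rep C \<in> \<Gamma>"
    using subgroup_add[OF subgroup_Gamma y(1)] by (metis add_minus_cancel)
  show "coset_of (\<Gamma> \<inter> N) (rep C) = C"
    using \<open>rep C \<in> C\<close> unfolding y(2) by (rule coset_of_eq_of_mem[OF subgroup_Gamma_Int_N])
qed

lemma cosets_eqI:
  assumes "C \<in> cosets" "D \<in> cosets" "- rep C + rep D \<in> \<Gamma> \<inter> N"
  shows "C = D"
proof -
  have "coset_of (\<Gamma> \<inter> N) (rep C) = coset_of (\<Gamma> \<inter> N) (rep D)"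
    using assms(3) by (simp only: coset_of_eq_iff[OF subgroup_Gamma_Int_N])
  then show ?thesis
    by (simp only: rep_cosets(3)[OF assms(1)] rep_cosets(3)[OF assms(2)])
qed

lemma separating_open_subgroup:
  obtains V where "is_subgroup V" "open V" "\<And>\<gamma>. \<gamma> \<in> \<Gamma> \<Longrightarrow> \<gamma> \<in> set_plus_grp N V \<Longrightarrow> \<gamma> \<in> N"
proof -
  have "\<exists>U. U \<subseteq> range (coset_of N) \<and> open (\<Union>U) \<and> U \<inter> coset_of N ` \<Gamma> = {coset_of N 0}"
    using discrete_image subgroup_zero[OF subgroup_Gamma] unfolding discrete_image_mod_def by (rule bspec)
  then obtain U where U: "U \<subseteq> range (coset_of N)" "open (\<Union>U)"
    "U \<inter> coset_of N ` \<Gamma> = {coset_of N 0}"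
    by blast
  have "coset_of N 0 \<in> U"
    using U(3) by blast
  then have "0 \<in> \<Union>U"
    using coset_of_self[OF subgroup_N, of 0] by blast
  then obtain V where V: "is_subgroup V" "open V" "V \<subseteq> \<Union>U"
    using l_group[unfolded l_group_def, rule_format, of "\<Union>U"] U(2) by blast
  have "\<gamma> \<in> N" if \<gamma>: "\<gamma> \<in> \<Gamma>" "\<gamma> \<in> set_plus_grp N V" for \<gamma>
  proof -
    obtain n v where nv: "n \<in> N" "v \<in> V" "\<gamma> = n + v"
      using \<gamma>(2) by (rule set_plus_grpE)
    obtain X where "X \<in> U" "v \<in> X"
      using nv(2) V(3) by blast
    moreover obtain y where "X = coset_of N y"
      using \<open>X \<in> U\<close> U(1) by blast
    ultimately have "\<gamma> \<in> X"
      using normal_subgroup_add_coset[OF normal nv(1)] nv(3) by simp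
    then have "coset_of N \<gamma> \<in> U"
      using \<open>X \<in> U\<close> coset_of_eq_of_mem[OF subgroup_N] \<open>X = coset_of N y\<close> by simp
    then have "coset_of N \<gamma> = coset_of N 0"
      using U(3) \<gamma>(1) by blast
    then show "\<gamma> \<in> N"
      using coset_of_self[OF subgroup_N, of \<gamma>] by (simp add: mem_coset_of)
  qed
  with V that show thesis by blast
qed

lemma cosets_eq_if_reps_in_same_translate:
  assumes V: "is_subgroup V" and sep: "\<And>\<gamma>. \<gamma> \<in> \<Gamma> \<Longrightarrow> \<gamma> \<in> set_plus_grp N V \<Longrightarrow> \<gamma> \<in> N"
    and C: "C \<in> cosets" "- e + rep C \<in> set_plus_grp N V"
    and C': "C' \<in> cosets" "- e + rep C' \<in> set_plus_grp N V"
  shows "C = C'"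
  using C(1) C'(1)
proof (rule cosets_eqI)
  have "- (- e + rep C) + (- e + rep C') \<in> set_plus_grp N V"
    using C(2) C'(2) subgroup_set_plus_normal[OF normal V] by (metis subgroup_add subgroup_uminus)
  moreover have "- (- e + rep C) + (- e + rep C') = - rep C + rep C'"
    by (simp add: minus_add add.assoc)
  moreover have "- rep C + rep C' \<in> \<Gamma>"
    using rep_cosets(2)[OF C(1)] rep_cosets(2)[OF C'(1)] subgroup_Gamma
    by (metis subgroup_add subgroup_uminus)
  ultimately show "- rep C + rep C' \<in> \<Gamma> \<inter> N"
    using sep by simp
qed

lemma finite_cosets_near:
  assumes "compact D"
  shows "finite {C \<in> cosets. rep C \<in> set_plus_grp N D}"
proof -
  obtain V where V: "is_subgroup V" "open V"
    and sep: "\<And>\<gamma>. \<gamma> \<in> \<Gamma> \<Longrightarrow> \<gamma> \<in> set_plus_grp N V \<Longrightarrow> \<gamma> \<in> N"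
    using separating_open_subgroup by blast
  have "D \<subseteq> (\<Union>d\<in>D. (\<lambda>x. d + x) ` V)"
    using subgroup_zero[OF V(1)] by force
  then obtain E where E: "finite E" "D \<subseteq> (\<Union>e\<in>E. (\<lambda>x. e + x) ` V)"
    using compactE_image[OF assms, of D "\<lambda>d. (\<lambda>x. d + x) ` V"] open_image_add_left[OF V(2)]
    by metis
  define near where "near e = {C \<in> cosets. - e + rep C \<in> set_plus_grp N V}" for e
  have "finite (near e)" for e
  proof (cases "near e = {}")
    case False
    then obtain C where "C \<in> near e" by blast
    then have "near e \<subseteq> {C}"
      using cosets_eq_if_reps_in_same_translate[OF V(1) sep] unfolding near_def by blast
    then show ?thesis by (rule finite_subset) simp
  qed simp
  moreover have "{C \<in> cosets. rep C \<in> set_plus_grp N D} \<subseteq> (\<Union>e\<in>E. near e)"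
  proof safe
    fix C assume C: "C \<in> cosets" "rep C \<in> set_plus_grp N D"
    then obtain n d where nd: "n \<in> N" "d \<in> D" "rep C = n + d"
      by (metis set_plus_grpE)
    then obtain e v where ev: "e \<in> E" "v \<in> V" "d = e + v"
      using E(2) by blast
    have "- e + rep C = (- e + n + e) + v"
      by (simp add: nd(3) ev(3) add.assoc)
    then have "- e + rep C \<in> set_plus_grp N V"
      using normal_subgroup_conj'[OF normal nd(1)] ev(2) by (simp add: set_plus_grpI)
    with C(1) ev(1) show "C \<in> (\<Union>e\<in>E. near e)"
      unfolding near_def by blast
  qed
  ultimately show ?thesis
    using E(1) by (meson finite_UN_I finite_subset)
qed

lemma Theta_summands_finite_support:
  assumes "compact C0" "{x. \<phi> x \<noteq> 0} \<subseteq> set_plus_grp N C0" "compact K"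
  shows "\<exists>F. finite F \<and> F \<subseteq> cosets \<and> (\<forall>C\<in>cosets - F. \<forall>g\<in>K. \<phi> (rep C + g) = 0)"
proof (intro exI conjI ballI)
  let ?D = "set_plus_grp C0 (uminus ` K)"
  show "finite {C \<in> cosets. rep C \<in> set_plus_grp N ?D}"
    using assms(1,3) by (intro finite_cosets_near compact_set_plus_grp compact_continuous_image
        continuous_intros)
  show "{C \<in> cosets. rep C \<in> set_plus_grp N ?D} \<subseteq> cosets"
    by blast
  fix C g assume C: "C \<in> cosets - {C \<in> cosets. rep C \<in> set_plus_grp N ?D}" and g: "g \<in> K"
  show "\<phi> (rep C + g) = 0"
  proof (rule ccontr)
    assume "\<phi> (rep C + g) \<noteq> 0"
    then obtain n c where nc: "n \<in> N" "c \<in> C0" "rep C + g = n + c"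
      using assms(2) by (blast elim: set_plus_grpE)
    have "rep C = n + (c + - g)"
      by (metis nc(3) add.assoc add_minus_cancel right_minus add_0_right)
    moreover have "c + - g \<in> ?D"
      using nc(2) g by (intro set_plus_grpI imageI)
    ultimately show False
      using C nc(1) by (simp add: set_plus_grpI)
  qed
qed

lemma Theta_eq_sum:
  assumes "finite F" "F \<subseteq> cosets" "\<And>C. C \<in> cosets - F \<Longrightarrow> \<phi> (rep C + g) = 0"
  shows "Theta N \<Gamma> \<phi> g = (\<Sum>C\<in>F. \<phi> (rep C + g))"
proof -
  have "Theta N \<Gamma> \<phi> g = (\<Sum>\<^sub>\<infinity>C\<in>F. \<phi> (rep C + g))"
    unfolding Theta_eq using assms(2,3) by (intro infsum_cong_neutral) auto
  then show ?thesis
    using assms(1) by simp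
qed

lemma Theta_locally_constant:
  assumes "locally_constant \<phi>" "compact C0" "{x. \<phi> x \<noteq> 0} \<subseteq> set_plus_grp N C0"
  shows "locally_constant (Theta N \<Gamma> \<phi>)"
proof (rule locally_constantI_local)
  fix g
  obtain K :: "'g set" where K: "is_subgroup K" "compact K" "open K"
    using l_group_compact_open_subgroup[OF l_group] by blast
  let ?U = "(\<lambda>x. g + x) ` K"
  obtain F where F: "finite F" "F \<subseteq> cosets" "\<forall>C\<in>cosets - F. \<forall>y\<in>?U. \<phi> (rep C + y) = 0"
    using Theta_summands_finite_support[OF assms(2,3) compact_image_add_left[OF K(2), where a = g]]
    by blast
  have "locally_constant (\<lambda>y. \<phi> (rep C + y))" for C
    using continuous_on_add[OF continuous_on_const continuous_on_id] assms(1)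
    by (rule locally_constant_compose)
  then have "locally_constant (\<lambda>y. \<Sum>C\<in>F. \<phi> (rep C + y))"
    using F(1) by (intro locally_constant_sum)
  moreover have "\<forall>y\<in>?U. Theta N \<Gamma> \<phi> y = (\<Sum>C\<in>F. \<phi> (rep C + y))"
    using F by (intro ballI Theta_eq_sum) auto
  moreover have "g \<in> ?U"
    using subgroup_zero[OF K(1)] by (rule rev_image_eqI) simp
  ultimately show "\<exists>U f. open U \<and> g \<in> U \<and> locally_constant f \<and> (\<forall>y\<in>U. Theta N \<Gamma> \<phi> y = f y)"
    using open_image_add_left[OF K(3)] by blast
qed

lemma Theta_support:
  assumes "{x. \<phi> x \<noteq> 0} \<subseteq> set_plus_grp N C0"
  shows "{x. Theta N \<Gamma> \<phi> x \<noteq> 0} \<subseteq> set_plus_grp (set_plus_grp \<Gamma> N) C0"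
proof
  fix g assume "g \<in> {x. Theta N \<Gamma> \<phi> x \<noteq> 0}"
  then obtain C where C: "C \<in> cosets" "\<phi> (rep C + g) \<noteq> 0"
    unfolding Theta_eq by (metis (mono_tags) infsum_0 mem_Collect_eq)
  then obtain n c where nc: "n \<in> N" "c \<in> C0" "rep C + g = n + c"
    using assms by (blast elim: set_plus_grpE)
  have "g = (- rep C + n) + c"
    by (metis nc(3) add.assoc minus_add_cancel)
  moreover have "- rep C + n \<in> set_plus_grp \<Gamma> N"
    using subgroup_uminus[OF subgroup_Gamma rep_cosets(2)[OF C(1)]] nc(1) by (rule set_plus_grpI)
  ultimately show "g \<in> set_plus_grp (set_plus_grp \<Gamma> N) C0"
    using nc(2) by (simp add: set_plus_grpI)
qed

lemma Theta_summand_coset_invariant: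
  fixes \<phi> chi :: "'g \<Rightarrow> complex"
  assumes chi: "\<forall>h\<in>\<Gamma> \<inter> N. chi h = 1" and \<phi>: "\<And>n g. n \<in> N \<Longrightarrow> \<phi> (n + g) = chi n * \<phi> g"
    and C: "C \<in> cosets" "x \<in> C"
  shows "\<phi> (x + g) = \<phi> (rep C + g)"
proof -
  have "- rep C + x \<in> \<Gamma> \<inter> N"
    using C(2) rep_cosets(3)[OF C(1)] by (metis mem_coset_of)
  with rep_cosets(2)[OF C(1)] have h: "rep C + (- rep C + x) - rep C \<in> \<Gamma> \<inter> N"
    by (rule conj_Gamma_Int_N)
  have "x + g = (rep C + (- rep C + x) - rep C) + (rep C + g)"
    by (simp add: add.assoc diff_conv_add_uminus del: add_uminus_conv_diff)
  then show ?thesis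
    using \<phi> h chi by simp
qed

lemma Theta_add_N:
  assumes chi_conj: "\<forall>\<gamma>\<in>\<Gamma>. \<forall>n\<in>N. chi (\<gamma> + n - \<gamma>) = chi n"
    and \<phi>: "\<And>n g. n \<in> N \<Longrightarrow> \<phi> (n + g) = chi n * \<phi> g" and n: "n \<in> N"
  shows "Theta N \<Gamma> \<phi> (n + g) = chi n * Theta N \<Gamma> \<phi> g"
proof -
  have summand: "\<phi> (rep C + (n + g)) = chi n * \<phi> (rep C + g)" if "C \<in> cosets" for C
  proof -
    have "rep C + (n + g) = (rep C + n - rep C) + (rep C + g)"
      by (simp add: add.assoc diff_conv_add_uminus del: add_uminus_conv_diff)
    then show ?thesis
      using \<phi> normal_subgroup_conj[OF normal n] chi_conj rep_cosets(2)[OF that] n by simp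
  qed
  have "Theta N \<Gamma> \<phi> (n + g) = (\<Sum>\<^sub>\<infinity>C\<in>cosets. chi n * \<phi> (rep C + g))"
    unfolding Theta_eq using summand by (rule infsum_cong)
  also have "\<dots> = chi n * Theta N \<Gamma> \<phi> g"
    unfolding Theta_eq by (rule infsum_cmult_right')
  finally show ?thesis .
qed

lemma shift_coset:
  assumes "a \<in> \<Gamma>"
  shows "(\<lambda>x. x + a) ` coset_of (\<Gamma> \<inter> N) y = coset_of (\<Gamma> \<inter> N) (y + a)"
proof (rule image_add_right_coset_of)
  fix h assume h: "h \<in> \<Gamma> \<inter> N"
  with assms show "a + h - a \<in> \<Gamma> \<inter> N"
    by (rule conj_Gamma_Int_N)
  show "- a + h + a \<in> \<Gamma> \<inter> N"
    using conj_Gamma_Int_N[OF subgroup_uminus[OF subgroup_Gamma assms] h] by simp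
qed

lemma shift_cosets:
  assumes a: "a \<in> \<Gamma>"
  shows "(\<lambda>C. (\<lambda>x. x + a) ` C) ` cosets = cosets"
proof
  show "(\<lambda>C. (\<lambda>x. x + a) ` C) ` cosets \<subseteq> cosets"
    using shift_coset[OF a] subgroup_add[OF subgroup_Gamma _ a] unfolding cosets_def by auto
  show "cosets \<subseteq> (\<lambda>C. (\<lambda>x. x + a) ` C) ` cosets"
  proof
    fix C assume "C \<in> cosets"
    then obtain y where y: "y \<in> \<Gamma>" "C = coset_of (\<Gamma> \<inter> N) y"
      unfolding cosets_def by blast
    then have "C = (\<lambda>x. x + a) ` coset_of (\<Gamma> \<inter> N) (y + - a)"
      by (simp add: shift_coset[OF a] add.assoc)
    moreover have "y + - a \<in> \<Gamma>"
      using subgroup_add[OF subgroup_Gamma y(1) subgroup_uminus[OF subgroup_Gamma a]] .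
    ultimately show "C \<in> (\<lambda>C. (\<lambda>x. x + a) ` C) ` cosets"
      unfolding cosets_def by blast
  qed
qed

lemma Theta_add_Gamma:
  assumes chi: "\<forall>h\<in>\<Gamma> \<inter> N. chi h = 1" and \<phi>: "\<And>n g. n \<in> N \<Longrightarrow> \<phi> (n + g) = chi n * \<phi> g"
    and a: "a \<in> \<Gamma>"
  shows "Theta N \<Gamma> \<phi> (a + g) = Theta N \<Gamma> \<phi> g"
proof -
  define shift where "shift C = (\<lambda>x. x + a) ` C" for C
  have "\<phi> (rep C + (a + g)) = \<phi> (rep (shift C) + g)" if C: "C \<in> cosets" for C
  proof -
    have "rep C + a \<in> shift C"
      unfolding shift_def using rep_cosets(1)[OF C] by blast
    moreover have "shift C \<in> cosets"
      using C shift_cosets[OF a] unfolding shift_def by blast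
    ultimately have "\<phi> ((rep C + a) + g) = \<phi> (rep (shift C) + g)"
      by (intro Theta_summand_coset_invariant[OF chi \<phi>])
    then show ?thesis
      by (simp add: add.assoc)
  qed
  then have "Theta N \<Gamma> \<phi> (a + g) = (\<Sum>\<^sub>\<infinity>C\<in>cosets. \<phi> (rep (shift C) + g))"
    unfolding Theta_eq by (rule infsum_cong)
  also have "\<dots> = (\<Sum>\<^sub>\<infinity>C\<in>shift ` cosets. \<phi> (rep C + g))"
    unfolding shift_def by (subst infsum_reindex) (simp_all add: inj_on_image comp_def)
  also have "\<dots> = Theta N \<Gamma> \<phi> g"
    unfolding shift_def shift_cosets[OF a] Theta_eq ..
  finally show ?thesis .
qed

lemma Theta_in_Ind:
  assumes chi_Gamma_N: "\<forall>h\<in>\<Gamma> \<inter> N. chi h = 1"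
    and chi_conj: "\<forall>\<gamma>\<in>\<Gamma>. \<forall>n\<in>N. chi (\<gamma> + n - \<gamma>) = chi n"
    and chi'_mult: "\<forall>x\<in>set_plus_grp \<Gamma> N. \<forall>y\<in>set_plus_grp \<Gamma> N. chi' (x + y) = chi' x * chi' y"
    and chi'_Gamma: "\<forall>\<gamma>\<in>\<Gamma>. chi' \<gamma> = 1" and chi'_N: "\<forall>n\<in>N. chi' n = chi n"
    and \<phi>: "\<phi> \<in> Ind N chi"
  shows "Theta N \<Gamma> \<phi> \<in> Ind (set_plus_grp \<Gamma> N) chi'"
proof -
  obtain C0 where C0: "compact C0" "{x. \<phi> x \<noteq> 0} \<subseteq> set_plus_grp N C0"
    using \<phi> by (rule Ind_compact_supportE)
  have equiv: "\<And>n g. n \<in> N \<Longrightarrow> \<phi> (n + g) = chi n * \<phi> g"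
    using \<phi> by (rule Ind_equivariant)
  have "Theta N \<Gamma> \<phi> (h + g) = chi' h * Theta N \<Gamma> \<phi> g" if h: "h \<in> set_plus_grp \<Gamma> N" for h g
  proof -
    obtain \<gamma> n where \<gamma>n: "\<gamma> \<in> \<Gamma>" "n \<in> N" "h = \<gamma> + n"
      using h by (rule set_plus_grpE)
    have "\<gamma> \<in> set_plus_grp \<Gamma> N" "n \<in> set_plus_grp \<Gamma> N"
      using \<gamma>n Gamma_subset_Gamma_plus_N N_subset_Gamma_plus_N by blast+
    then have "chi' h = chi n"
      using chi'_mult chi'_Gamma chi'_N \<gamma>n by simp
    then show ?thesis
      using Theta_add_Gamma[OF chi_Gamma_N equiv \<gamma>n(1)] Theta_add_N[OF chi_conj equiv \<gamma>n(2)] \<gamma>n(3)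
      by (simp add: add.assoc)
  qed
  then show ?thesis
    using Theta_locally_constant[OF Ind_locally_constant[OF \<phi>] C0] C0(1) Theta_support[OF C0(2)]
    by (intro IndI)
qed

lemma indicator_in_Ind:
  fixes K D :: "'g set"
  assumes K: "is_subgroup K" "open K" and D: "compact D" "\<And>d k. d \<in> D \<Longrightarrow> k \<in> K \<Longrightarrow> d + k \<in> D"
  shows "(\<lambda>x. if x \<in> set_plus_grp N D then 1 else 0) \<in> Ind N (\<lambda>_. 1)"
proof -
  have "x + k \<in> set_plus_grp N D" if x: "x \<in> set_plus_grp N D" and k: "k \<in> K" for x k
  proof -
    obtain n d where "n \<in> N" "d \<in> D" "x = n + d"
      using x by (rule set_plus_grpE)
    then show ?thesis
      using D(2) k by (simp add: add.assoc set_plus_grpI)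
  qed
  then have "locally_constant (\<lambda>x. if x \<in> set_plus_grp N D then 1 else 0 :: complex)"
    using K by (intro locally_constant_indicator_stable)
  then show ?thesis
    using set_plus_grp_add_left_iff[OF subgroup_N] D(1) by (intro IndI) auto
qed

lemma Theta_indicator_nonzero:
  assumes D: "compact D" and c: "c \<in> D"
  shows "Theta N \<Gamma> (\<lambda>x. if x \<in> set_plus_grp N D then 1 else 0) c \<noteq> 0"
proof -
  let ?\<psi> = "\<lambda>x. if x \<in> set_plus_grp N D then 1 else 0 :: complex"
  have supp: "{x. ?\<psi> x \<noteq> 0} \<subseteq> set_plus_grp N D"
    by auto
  obtain F where F: "finite F" "F \<subseteq> cosets" "\<forall>C\<in>cosets - F. ?\<psi> (rep C + c) = 0"
    using Theta_summands_finite_support[OF D supp compact_sing[of c]] by auto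
  define C0 where "C0 = coset_of (\<Gamma> \<inter> N) 0"
  have C0: "C0 \<in> cosets"
    unfolding C0_def cosets_def using subgroup_zero[OF subgroup_Gamma] by (rule imageI)
  have "rep C0 \<in> N"
    using rep_cosets(1)[OF C0] unfolding C0_def by (simp add: mem_coset_of)
  then have "1 = Re (?\<psi> (rep C0 + c))"
    using c by (simp add: set_plus_grpI)
  also have "\<dots> \<le> (\<Sum>C\<in>insert C0 F. Re (?\<psi> (rep C + c)))"
    using F(1) by (intro member_le_sum) auto
  also have "\<dots> = Re (Theta N \<Gamma> ?\<psi> c)"
    using F C0 by (subst Theta_eq_sum[of "insert C0 F"]) auto
  finally show ?thesis
    by auto
qed

context
  fixes f \<psi> chi chi' :: "'g \<Rightarrow> complex"
  assumes chi'_Gamma: "\<forall>\<gamma>\<in>\<Gamma>. chi' \<gamma> = 1" and chi'_N: "\<forall>n\<in>N. chi' n = chi n"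
    and f: "f \<in> Ind (set_plus_grp \<Gamma> N) chi'" and \<psi>: "\<psi> \<in> Ind N (\<lambda>_. 1)"
begin

lemma Theta_trivial_in_Ind: "Theta N \<Gamma> \<psi> \<in> Ind (set_plus_grp \<Gamma> N) (\<lambda>_. 1)"
  using \<psi> by (intro Theta_in_Ind) simp_all

lemma quotient_by_Theta_in_Ind: "(\<lambda>x. f x * \<psi> x / Theta N \<Gamma> \<psi> x) \<in> Ind N chi"
proof -
  obtain C0 where C0: "compact C0" "{x. \<psi> x \<noteq> 0} \<subseteq> set_plus_grp N C0"
    using \<psi> by (rule Ind_compact_supportE)
  have "locally_constant (\<lambda>x. f x * \<psi> x)"
    using Ind_locally_constant[OF f] Ind_locally_constant[OF \<psi>] by (rule locally_constant_combine)
  then have lc: "locally_constant (\<lambda>x. f x * \<psi> x / Theta N \<Gamma> \<psi> x)"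
    using Ind_locally_constant[OF Theta_trivial_in_Ind] by (rule locally_constant_combine)
  have equiv: "f (n + g) * \<psi> (n + g) / Theta N \<Gamma> \<psi> (n + g) = chi n * (f g * \<psi> g / Theta N \<Gamma> \<psi> g)"
    if "n \<in> N" for n g
    using that Ind_equivariant[OF f] Ind_equivariant[OF \<psi>] Ind_equivariant[OF Theta_trivial_in_Ind]
      N_subset_Gamma_plus_N chi'_N by auto
  have "{x. f x * \<psi> x / Theta N \<Gamma> \<psi> x \<noteq> 0} \<subseteq> set_plus_grp N C0"
    using C0(2) by auto
  with lc equiv C0(1) show ?thesis
    by (rule IndI)
qed

lemma Theta_quotient_by_Theta:
  assumes supp_f: "{x. f x \<noteq> 0} \<subseteq> set_plus_grp (set_plus_grp \<Gamma> N) D"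
    and nonzero: "\<forall>c\<in>D. Theta N \<Gamma> \<psi> c \<noteq> 0"
  shows "Theta N \<Gamma> (\<lambda>x. f x * \<psi> x / Theta N \<Gamma> \<psi> x) = f"
proof
  fix g
  define S where "S = Theta N \<Gamma> \<psi>"
  have f_equiv: "\<And>h g. h \<in> set_plus_grp \<Gamma> N \<Longrightarrow> f (h + g) = chi' h * f g"
    using f by (rule Ind_equivariant)
  have S_inv: "\<And>h g. h \<in> set_plus_grp \<Gamma> N \<Longrightarrow> S (h + g) = S g"
    using Ind_equivariant[OF Theta_trivial_in_Ind] unfolding S_def by simp
  have "Theta N \<Gamma> (\<lambda>x. f x * \<psi> x / S x) g = (\<Sum>\<^sub>\<infinity>C\<in>cosets. f g / S g * \<psi> (rep C + g))"
    unfolding Theta_eq using f_equiv S_inv subsetD[OF Gamma_subset_Gamma_plus_N] chi'_Gamma rep_cosets(2)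
    by (intro infsum_cong) auto
  also have "\<dots> = f g / S g * S g"
    unfolding S_def Theta_eq by (rule infsum_cmult_right')
  also have "\<dots> = f g"
  proof (cases "f g = 0")
    case False
    then obtain h c where "h \<in> set_plus_grp \<Gamma> N" "c \<in> D" "g = h + c"
      using supp_f by (blast elim: set_plus_grpE)
    then have "S g \<noteq> 0"
      using S_inv nonzero unfolding S_def by simp
    then show ?thesis by simp
  qed simp
  finally show "Theta N \<Gamma> (\<lambda>x. f x * \<psi> x / Theta N \<Gamma> \<psi> x) g = f g"
    unfolding S_def .
qed

end

lemma Ind_subset_Theta_image:
  fixes chi chi' :: "'g \<Rightarrow> complex"
  assumes chi'_Gamma: "\<forall>\<gamma>\<in>\<Gamma>. chi' \<gamma> = 1" and chi'_N: "\<forall>n\<in>N. chi' n = chi n"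
  shows "Ind (set_plus_grp \<Gamma> N) chi' \<subseteq> Theta N \<Gamma> ` Ind N chi"
proof
  fix f assume f: "f \<in> Ind (set_plus_grp \<Gamma> N) chi'"
  then obtain C1 where C1: "compact C1" "{x. f x \<noteq> 0} \<subseteq> set_plus_grp (set_plus_grp \<Gamma> N) C1"
    by (rule Ind_compact_supportE)
  obtain K :: "'g set" where K: "is_subgroup K" "compact K" "open K"
    using l_group_compact_open_subgroup[OF l_group] by blast
  define D where "D = set_plus_grp C1 K"
  have D: "compact D" "C1 \<subseteq> D" "\<And>d k. d \<in> D \<Longrightarrow> k \<in> K \<Longrightarrow> d + k \<in> D"
    unfolding D_def using compact_set_plus_grp[OF C1(1) K(2)] set_plus_grp_subgroup_right[OF K(1)]
    by blast+
  let ?\<psi> = "\<lambda>x. if x \<in> set_plus_grp N D then 1 else 0 :: complex"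
  have supp_f: "{x. f x \<noteq> 0} \<subseteq> set_plus_grp (set_plus_grp \<Gamma> N) D"
    using C1(2) set_plus_grp_mono[OF D(2)] by (rule subset_trans)
  have \<psi>: "?\<psi> \<in> Ind N (\<lambda>_. 1)"
    using K(1,3) D(1,3) by (rule indicator_in_Ind)
  have nonzero: "\<forall>c\<in>D. Theta N \<Gamma> ?\<psi> c \<noteq> 0"
    using Theta_indicator_nonzero[OF D(1)] by blast
  define \<phi> where "\<phi> = (\<lambda>x. f x * ?\<psi> x / Theta N \<Gamma> ?\<psi> x)"
  have "\<phi> \<in> Ind N chi" "Theta N \<Gamma> \<phi> = f"
    unfolding \<phi>_def using quotient_by_Theta_in_Ind[OF chi'_Gamma chi'_N f \<psi>]
      Theta_quotient_by_Theta[OF chi'_Gamma chi'_N f \<psi> supp_f nonzero] by simp_all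
  then show "f \<in> Theta N \<Gamma> ` Ind N chi"
    by blast
qed

end

theorem lemma4p22:
  fixes N \<Gamma> :: "'g::topological_group_add set"
    and chi chi' :: "'g \<Rightarrow> complex"
  assumes "l_group TYPE('g)"
    and "closed N" and "is_normal_subgroup N"
    and "character N chi"
    and "is_subgroup \<Gamma>" and "discrete \<Gamma>"
    and "\<forall>x\<in>\<Gamma> \<inter> N. chi x = 1"
    and "discrete_image_mod N \<Gamma>"
    and "\<forall>\<gamma>\<in>\<Gamma>. \<forall>n\<in>N. chi (\<gamma> + n - \<gamma>) = chi n"
    and "character (set_plus_grp \<Gamma> N) chi'"
    and "\<forall>\<gamma>\<in>\<Gamma>. chi' \<gamma> = 1"
    and "\<forall>n\<in>N. chi' n = chi n"
  shows "Theta N \<Gamma> ` Ind N chi = Ind (set_plus_grp \<Gamma> N) chi'"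
proof -
  interpret discrete_mod_normal N \<Gamma>
    using assms(1,3,5,8) by (rule discrete_mod_normal.intro)
  have chi'_mult: "\<forall>x\<in>set_plus_grp \<Gamma> N. \<forall>y\<in>set_plus_grp \<Gamma> N. chi' (x + y) = chi' x * chi' y"
    using assms(10) unfolding character_def by blast
  show ?thesis
  proof
    show "Theta N \<Gamma> ` Ind N chi \<subseteq> Ind (set_plus_grp \<Gamma> N) chi'"
      using Theta_in_Ind[OF assms(7,9) chi'_mult assms(11,12)] by blast
    show "Ind (set_plus_grp \<Gamma> N) chi' \<subseteq> Theta N \<Gamma> ` Ind N chi"
      using assms(11,12) by (rule Ind_subset_Theta_image)
  qed
qed

end
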